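(* Let $q$ be a prime power, let $\mathcal{F}$ be a flag on $\mathbb{F}_{q^n}$ whose best friend is the subfield $\mathbb{F}_{q^m}$, and let $\beta\in\mathbb{F}_{q^n}^*$. Then $|\mathrm{Orb}_\beta(\mathcal{F})|=|\beta|$ if and only if $|\beta|$ and $q^m-1$ are coprime. In particular, this equality always holds if $q=2$ and $m=1$.
   Context: A flag on $\mathbb{F}_{q^n}$ is a sequence $(\mathcal{F}_1,\ldots,\mathcal{F}_r)$ of $\mathbb{F}_q$-subspaces with $\{0\}\subsetneq\mathcal{F}_1\subsetneq\cdots\subsetneq\mathcal{F}_r\subsetneq\mathbb{F}_{q^n}$. For $\beta\in\mathbb{F}_{q^n}^*$ of multiplicative order $|\beta|$, $\mathcal{F}\beta=(\mathcal{F}_1\beta,\ldots,\mathcal{F}_r\beta)$ with $\mathcal{U}\beta=\{u\beta:u\in\mathcal{U}\}$, and $\mathrm{Orb}_\beta(\mathcal{F})=\{\mathcal{F}\beta^j:0\le j\le|\beta|-1\}$. A subfield $\mathbb{F}_{q^m}$ is a friend of $\mathcal{F}$ if every $\mathcal{F}_i$ is an $\mathbb{F}_{q^m}$-vector space; the best friend is the largest friend. *)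

theory Defs
  imports "HOL-Computational_Algebra.Primes"
begin

text \<open>The ambient field F_{q^n} is modelled as a finite field type 'a; the base field
  F_q is a subfield Fq of it with card Fq = q.\<close>

definition is_subfield :: "'a::field set \<Rightarrow> bool" where
  "is_subfield S \<longleftrightarrow> 0 \<in> S \<and> 1 \<in> S \<and>
     (\<forall>x\<in>S. \<forall>y\<in>S. x + y \<in> S \<and> x * y \<in> S) \<and>
     (\<forall>x\<in>S. - x \<in> S) \<and> (\<forall>x\<in>S. inverse x \<in> S)"

definition is_subspace_over :: "'a::field set \<Rightarrow> 'a set \<Rightarrow> bool" where
  "is_subspace_over S U \<longleftrightarrow> 0 \<in> U \<and>
     (\<forall>x\<in>U. \<forall>y\<in>U. x + y \<in> U) \<and> (\<forall>s\<in>S. \<forall>u\<in>U. s * u \<in> U)"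

definition is_flag :: "'a::field set \<Rightarrow> 'a set list \<Rightarrow> bool" where
  "is_flag Fq F \<longleftrightarrow> F \<noteq> [] \<and> (\<forall>U\<in>set F. is_subspace_over Fq U) \<and>
     {0} \<subset> F ! 0 \<and> F ! (length F - 1) \<subset> UNIV \<and>
     (\<forall>i. Suc i < length F \<longrightarrow> F ! i \<subset> F ! Suc i)"

definition is_friend :: "'a::field set \<Rightarrow> 'a set list \<Rightarrow> 'a set \<Rightarrow> bool" where
  "is_friend Fq F E \<longleftrightarrow> is_subfield E \<and> Fq \<subseteq> E \<and> (\<forall>U\<in>set F. is_subspace_over E U)"

definition is_best_friend :: "'a::{field,finite} set \<Rightarrow> 'a set list \<Rightarrow> 'a set \<Rightarrow> bool" where
  "is_best_friend Fq F E \<longleftrightarrow> is_friend Fq F E \<and>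
     (\<forall>E'. is_friend Fq F E' \<longrightarrow> card E' \<le> card E)"

definition mult_order :: "'a::field \<Rightarrow> nat" where
  "mult_order b = (LEAST k. 0 < k \<and> b ^ k = 1)"

definition flag_mult :: "'a::field set list \<Rightarrow> 'a \<Rightarrow> 'a set list" where
  "flag_mult F b = map (\<lambda>U. (\<lambda>u. u * b) ` U) F"

definition orbit :: "'a::field \<Rightarrow> 'a set list \<Rightarrow> 'a set list set" where
  "orbit b F = {flag_mult F (b ^ j) | j. j < mult_order b}"

end

theory Submission
  imports Defs "HOL-Computational_Algebra.Polynomial"
begin

text \<open>A nonzero \<gamma> fixes the flag iff \<gamma> lies in its stabilizer
  {\<gamma>. U\<gamma> \<subseteq> U for every U in the flag}. The stabilizer is itself a friend and contains every
  friend, so it is the best friend \<open>E\<close>. The nonzero elements of \<open>E\<close> are exactly the roots of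
  \<open>x ^ (q^m - 1) = 1\<close>, hence \<beta>^d fixes the flag iff \<open>|\<beta>|\<close> divides \<open>d (q^m - 1)\<close>.
  The orbit has \<open>|\<beta>|\<close> elements iff no \<open>0 < d < |\<beta>|\<close> fixes the flag, i.e. iff \<open>|\<beta>|\<close> and
  \<open>q^m - 1\<close> are coprime.\<close>

lemma
  assumes "0 < k"
  shows finite_roots_of_unity: "finite {x::'a::idom. x ^ k = 1}"
    and card_roots_of_unity_le: "card {x::'a::idom. x ^ k = 1} \<le> k"
proof -
  let ?p = "monom (1::'a) k - 1"
  have "coeff ?p k = 1" using assms by (simp add: coeff_monom)
  then have "?p \<noteq> 0" by (metis coeff_0 zero_neq_one)
  moreover have roots: "{x. poly ?p x = 0} = {x. x ^ k = 1}" by (auto simp: poly_monom)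
  ultimately show "finite {x::'a. x ^ k = 1}" using poly_roots_finite[of ?p] by simp
  have "card {x. poly ?p x = 0} \<le> degree ?p" using \<open>?p \<noteq> 0\<close> by (rule card_poly_roots_bound)
  moreover have "degree ?p \<le> k" by (intro degree_diff_le degree_monom_le) auto
  ultimately show "card {x::'a. x ^ k = 1} \<le> k" using roots by simp
qed

lemma subfield_power_card_minus_one:
  assumes "is_subfield S" "finite S" "x \<in> S" "x \<noteq> 0"
  shows "x ^ (card S - 1) = 1"
proof -
  let ?S = "S - {0}"
  have "inj_on ((*) x) ?S" using assms(4) by (auto simp: inj_on_def)
  moreover have "(*) x ` ?S \<subseteq> ?S" using assms unfolding is_subfield_def by auto
  ultimately have "bij_betw ((*) x) ?S ?S"
    using assms(2) by (simp add: bij_betw_def endo_inj_surj)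
  then have "(\<Prod>y\<in>?S. x * y) = \<Prod>?S" by (rule prod.reindex_bij_betw)
  then have "x ^ card ?S * \<Prod>?S = 1 * \<Prod>?S" by (simp add: prod.distrib)
  moreover have "\<Prod>?S \<noteq> 0" using assms(2) by simp
  moreover have "card ?S = card S - 1"
    using assms(1,2) by (simp add: card_Diff_singleton is_subfield_def)
  ultimately show ?thesis by simp
qed

lemma subfield_mem_iff_power:
  fixes E :: "'a::field set"
  assumes "is_subfield E" "finite E" "x \<noteq> 0"
  shows "x \<in> E \<longleftrightarrow> x ^ (card E - 1) = 1"
proof -
  have "card {0 :: 'a, 1} \<le> card E"
    using assms(1,2) by (intro card_mono) (auto simp: is_subfield_def)
  then have pos: "0 < card E - 1" by simp
  have sub: "E - {0} \<subseteq> {x. x ^ (card E - 1) = 1}"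
    using subfield_power_card_minus_one[OF assms(1,2)] by auto
  moreover have "card {x :: 'a. x ^ (card E - 1) = 1} \<le> card (E - {0})"
    using card_roots_of_unity_le[OF pos] assms(1,2)
    by (simp add: card_Diff_singleton is_subfield_def)
  ultimately have "E - {0} = {x. x ^ (card E - 1) = 1}"
    using finite_roots_of_unity[OF pos] by (intro card_seteq)
  then show ?thesis using assms(3) by auto
qed

lemma finite_field_root_of_unity:
  fixes x :: "'a::{field,finite}"
  assumes "x \<noteq> 0"
  shows "0 < card (UNIV :: 'a set) - 1" and "x ^ (card (UNIV :: 'a set) - 1) = 1"
proof -
  have "card {0::'a, 1} \<le> card (UNIV :: 'a set)" by (intro card_mono) auto
  then show "0 < card (UNIV :: 'a set) - 1" by simp
  show "x ^ (card (UNIV :: 'a set) - 1) = 1"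
    using subfield_power_card_minus_one[of UNIV x] assms by (simp add: is_subfield_def)
qed

lemma
  fixes \<beta> :: "'a::field"
  assumes "0 < k" "\<beta> ^ k = 1"
  shows mult_order_pos: "0 < mult_order \<beta>"
    and power_mult_order: "\<beta> ^ mult_order \<beta> = 1"
  using LeastI[of "\<lambda>k. 0 < k \<and> \<beta> ^ k = 1" k] assms by (auto simp: mult_order_def)

lemma power_eq_1_iff_mult_order_dvd:
  fixes \<beta> :: "'a::field"
  assumes "0 < k" "\<beta> ^ k = 1"
  shows "\<beta> ^ j = 1 \<longleftrightarrow> mult_order \<beta> dvd j"
proof
  let ?N = "mult_order \<beta>"
  have N: "0 < ?N" "\<beta> ^ ?N = 1"
    using mult_order_pos[OF assms] power_mult_order[OF assms] by auto
  assume "\<beta> ^ j = 1"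
  moreover have "\<beta> ^ j = (\<beta> ^ ?N) ^ (j div ?N) * \<beta> ^ (j mod ?N)"
    by (simp flip: power_mult power_add)
  ultimately have "\<beta> ^ (j mod ?N) = 1" using N by simp
  moreover have "j mod ?N < ?N" using N by simp
  ultimately have "\<not> 0 < j mod ?N"
    using not_less_Least[of "j mod ?N" "\<lambda>k. 0 < k \<and> \<beta> ^ k = 1"] by (auto simp: mult_order_def)
  then show "?N dvd j" by (simp add: mod_greater_zero_iff_not_dvd)
next
  assume "mult_order \<beta> dvd j"
  then show "\<beta> ^ j = 1" using power_mult_order[OF assms] by (auto simp: power_mult)
qed

definition flag_stabilizer :: "'a::field set list \<Rightarrow> 'a set" where
  "flag_stabilizer F = {\<gamma>. \<forall>U\<in>set F. \<forall>u\<in>U. u * \<gamma> \<in> U}"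

lemma mult_right_image_eq:
  fixes U :: "'a::field set"
  assumes "finite U" "\<gamma> \<noteq> 0" "\<forall>u\<in>U. u * \<gamma> \<in> U"
  shows "(\<lambda>u. u * \<gamma>) ` U = U"
  using assms by (intro endo_inj_surj) (auto simp: inj_on_def)

lemma flag_mult_eq_self_iff:
  fixes F :: "'a::{field,finite} set list"
  assumes "\<gamma> \<noteq> 0"
  shows "flag_mult F \<gamma> = F \<longleftrightarrow> \<gamma> \<in> flag_stabilizer F"
proof -
  have "(\<lambda>u. u * \<gamma>) ` U = U \<longleftrightarrow> (\<forall>u\<in>U. u * \<gamma> \<in> U)" for U :: "'a set"
    using mult_right_image_eq[OF _ assms, of U] by auto
  then show ?thesis
    using map_eq_conv[of "\<lambda>U. (\<lambda>u. u * \<gamma>) ` U" F "\<lambda>U. U"]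
    by (simp add: flag_mult_def flag_stabilizer_def)
qed

lemma inverse_mem_flag_stabilizer:
  fixes F :: "'a::{field,finite} set list"
  assumes "\<gamma> \<in> flag_stabilizer F" "\<gamma> \<noteq> 0"
  shows "inverse \<gamma> \<in> flag_stabilizer F"
proof -
  have "u * inverse \<gamma> \<in> U" if U: "U \<in> set F" and u: "u \<in> U" for U u
  proof -
    have "(\<lambda>v. v * \<gamma>) ` U = U"
      using mult_right_image_eq[of U \<gamma>] assms U by (auto simp: flag_stabilizer_def)
    then obtain v where "v \<in> U" "u = v * \<gamma>" using u by blast
    then show ?thesis using assms(2) by (simp add: mult.assoc)
  qed
  then show ?thesis by (simp add: flag_stabilizer_def)
qed

lemma flag_stabilizer_is_friend:
  fixes F :: "'a::{field,finite} set list"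
  assumes friend: "is_friend Fq F E"
  shows "E \<subseteq> flag_stabilizer F" and "is_friend Fq F (flag_stabilizer F)"
proof -
  let ?L = "flag_stabilizer F"
  have E: "is_subfield E" "Fq \<subseteq> E" and sub: "\<And>U. U \<in> set F \<Longrightarrow> is_subspace_over E U"
    using friend by (auto simp: is_friend_def)
  have mem: "u * x \<in> U" if "x \<in> ?L" "U \<in> set F" "u \<in> U" for x U u
    using that by (auto simp: flag_stabilizer_def)
  show EL: "E \<subseteq> ?L"
    using sub by (auto simp: flag_stabilizer_def is_subspace_over_def mult.commute)
  have neg: "- x \<in> ?L" if "x \<in> ?L" for x
  proof -
    have "(- 1) * (u * x) \<in> U" if "U \<in> set F" "u \<in> U" for U u
      using sub[OF that(1)] mem[OF \<open>x \<in> ?L\<close> that] E(1)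
      unfolding is_subspace_over_def is_subfield_def by blast
    then show ?thesis by (simp add: flag_stabilizer_def)
  qed
  have zero: "0 \<in> ?L" and one: "1 \<in> ?L"
    using sub by (auto simp: flag_stabilizer_def is_subspace_over_def)
  have "is_subfield ?L"
    unfolding is_subfield_def
  proof (intro conjI ballI zero one)
    fix x y assume "x \<in> ?L" "y \<in> ?L"
    then show "x + y \<in> ?L" "x * y \<in> ?L"
      using sub mem by (auto simp: flag_stabilizer_def is_subspace_over_def distrib_left
          simp flip: mult.assoc)
  next
    fix x assume "x \<in> ?L"
    then show "- x \<in> ?L" using neg by blast
    show "inverse x \<in> ?L"
      using inverse_mem_flag_stabilizer[OF \<open>x \<in> ?L\<close>] zero by (cases "x = 0") auto
  qed
  moreover have "is_subspace_over ?L U" if "U \<in> set F" for U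
    using sub[OF that] mem[OF _ that] by (auto simp: is_subspace_over_def mult.commute)
  ultimately show "is_friend Fq F ?L"
    using E(2) EL by (auto simp: is_friend_def)
qed

lemma best_friend_eq_flag_stabilizer:
  fixes F :: "'a::{field,finite} set list"
  assumes "is_best_friend Fq F E"
  shows "E = flag_stabilizer F"
  using assms flag_stabilizer_is_friend[of Fq F E]
  by (intro card_seteq) (auto simp: is_best_friend_def)

lemma flag_mult_power_eq_self_iff:
  fixes F :: "'a::{field,finite} set list"
  assumes "is_best_friend Fq F E" "\<beta> \<noteq> 0"
  shows "flag_mult F (\<beta> ^ d) = F \<longleftrightarrow> mult_order \<beta> dvd d * (card E - 1)"
proof -
  have "is_subfield E" using assms(1) by (simp add: is_best_friend_def is_friend_def)
  have "flag_mult F (\<beta> ^ d) = F \<longleftrightarrow> \<beta> ^ d \<in> E"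
    using flag_mult_eq_self_iff[of "\<beta> ^ d" F] best_friend_eq_flag_stabilizer[OF assms(1)] assms(2)
    by simp
  also have "\<dots> \<longleftrightarrow> \<beta> ^ (d * (card E - 1)) = 1"
    using subfield_mem_iff_power[OF \<open>is_subfield E\<close>] assms(2) by (simp add: power_mult)
  also have "\<dots> \<longleftrightarrow> mult_order \<beta> dvd d * (card E - 1)"
    using power_eq_1_iff_mult_order_dvd finite_field_root_of_unity[OF assms(2)] by blast
  finally show ?thesis .
qed

lemma flag_mult_mult: "flag_mult (flag_mult F a) b = flag_mult F (a * b)"
  by (simp add: flag_mult_def image_image mult.assoc comp_def)

lemma flag_mult_1: "flag_mult F 1 = F"
  by (simp add: flag_mult_def)

lemma flag_mult_cancel:
  assumes "a \<noteq> 0"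
  shows "flag_mult F a = flag_mult G a \<longleftrightarrow> F = G"
  by (metis assms flag_mult_1 flag_mult_mult right_inverse)

lemma inj_on_flag_mult_powers_iff:
  fixes \<beta> :: "'a::field"
  assumes "\<beta> \<noteq> 0"
  shows "inj_on (\<lambda>j. flag_mult F (\<beta> ^ j)) {..<N} \<longleftrightarrow>
    (\<forall>d. 0 < d \<longrightarrow> d < N \<longrightarrow> flag_mult F (\<beta> ^ d) \<noteq> F)"
proof -
  have shift: "flag_mult F (\<beta> ^ i) = flag_mult F (\<beta> ^ j) \<longleftrightarrow> flag_mult F (\<beta> ^ (j - i)) = F"
    if "i \<le> j" for i j
  proof -
    have "flag_mult F (\<beta> ^ j) = flag_mult (flag_mult F (\<beta> ^ (j - i))) (\<beta> ^ i)"
      using that by (simp add: flag_mult_mult flip: power_add)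
    then show ?thesis using flag_mult_cancel[of "\<beta> ^ i"] assms by auto
  qed
  show ?thesis
  proof
    assume inj: "inj_on (\<lambda>j. flag_mult F (\<beta> ^ j)) {..<N}"
    show "\<forall>d. 0 < d \<longrightarrow> d < N \<longrightarrow> flag_mult F (\<beta> ^ d) \<noteq> F"
      using inj_onD[OF inj, of 0] shift[of 0] by auto
  next
    assume fixfree: "\<forall>d. 0 < d \<longrightarrow> d < N \<longrightarrow> flag_mult F (\<beta> ^ d) \<noteq> F"
    have ordered: "i = j"
      if "j < N" "i \<le> j" "flag_mult F (\<beta> ^ i) = flag_mult F (\<beta> ^ j)" for i j
    proof (rule ccontr)
      assume "i \<noteq> j"
      then have "0 < j - i" "j - i < N" using that(1,2) by auto
      then show False using fixfree shift[OF that(2)] that(3) by auto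
    qed
    show "inj_on (\<lambda>j. flag_mult F (\<beta> ^ j)) {..<N}"
    proof (rule inj_onI)
      fix i j assume "i \<in> {..<N}" "j \<in> {..<N}" "flag_mult F (\<beta> ^ i) = flag_mult F (\<beta> ^ j)"
      then show "i = j" using ordered[of j i] ordered[of i j] by (cases "i \<le> j") auto
    qed
  qed
qed

lemma card_orbit_eq_mult_order_iff:
  fixes \<beta> :: "'a::field"
  assumes "\<beta> \<noteq> 0"
  shows "card (orbit \<beta> F) = mult_order \<beta> \<longleftrightarrow>
    (\<forall>d. 0 < d \<longrightarrow> d < mult_order \<beta> \<longrightarrow> flag_mult F (\<beta> ^ d) \<noteq> F)"
proof -
  have "orbit \<beta> F = (\<lambda>j. flag_mult F (\<beta> ^ j)) ` {..<mult_order \<beta>}"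
    by (auto simp: orbit_def)
  then show ?thesis
    using inj_on_iff_eq_card[of "{..<mult_order \<beta>}" "\<lambda>j. flag_mult F (\<beta> ^ j)"]
      inj_on_flag_mult_powers_iff[OF assms, of F "mult_order \<beta>"]
    by simp
qed

lemma coprime_iff_no_proper_multiple:
  fixes N c :: nat
  assumes "0 < N"
  shows "coprime N c \<longleftrightarrow> (\<forall>d. 0 < d \<longrightarrow> d < N \<longrightarrow> \<not> N dvd d * c)"
proof
  assume "coprime N c"
  then show "\<forall>d. 0 < d \<longrightarrow> d < N \<longrightarrow> \<not> N dvd d * c"
    by (auto simp: coprime_dvd_mult_left_iff nat_dvd_not_less)
next
  assume no_multiple: "\<forall>d. 0 < d \<longrightarrow> d < N \<longrightarrow> \<not> N dvd d * c"
  let ?g = "gcd N c"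
  have "N div ?g * c = N * (c div ?g)" by (simp add: dvd_div_mult div_mult_swap)
  then have "N dvd N div ?g * c" by simp
  moreover have "0 < N div ?g" using assms by (simp add: div_greater_zero_iff gcd_le1_nat)
  ultimately have "\<not> N div ?g < N" using no_multiple by blast
  moreover have "0 < ?g" using assms by simp
  ultimately have "?g = 1" using assms div_less_dividend[of ?g N] by linarith
  then show "coprime N c" by (simp add: coprime_iff_gcd_eq_1)
qed

theorem corollary4p3:
  fixes Fq :: "'a::{field,finite} set" and F :: "'a set list" and E :: "'a set"
    and q n m :: nat and \<beta> :: 'a
  assumes "\<exists>p k. prime p \<and> 0 < k \<and> q = p ^ k"
    and "is_subfield Fq" and "card Fq = q" and "card (UNIV :: 'a set) = q ^ n"
    and "is_flag Fq F"
    and "is_best_friend Fq F E" and "card E = q ^ m"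
    and "\<beta> \<noteq> 0"
  shows "(card (orbit \<beta> F) = mult_order \<beta> \<longleftrightarrow> coprime (mult_order \<beta>) (q ^ m - 1))
     \<and> (q = 2 \<and> m = 1 \<longrightarrow> card (orbit \<beta> F) = mult_order \<beta>)"
proof -
  have "0 < mult_order \<beta>"
    using mult_order_pos finite_field_root_of_unity[OF assms(8)] by blast
  have "card (orbit \<beta> F) = mult_order \<beta> \<longleftrightarrow>
      (\<forall>d. 0 < d \<longrightarrow> d < mult_order \<beta> \<longrightarrow> \<not> mult_order \<beta> dvd d * (q ^ m - 1))"
    using card_orbit_eq_mult_order_iff[OF assms(8)] flag_mult_power_eq_self_iff[OF assms(6,8)] assms(7)
    by simp
  also have "\<dots> \<longleftrightarrow> coprime (mult_order \<beta>) (q ^ m - 1)"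
    using coprime_iff_no_proper_multiple[OF \<open>0 < mult_order \<beta>\<close>] by simp
  finally show ?thesis by auto
qed

end
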